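(* Let $\mathcal{H}$ be a complex Hilbert space, let $T, S\in\mathbb{B}(\mathcal{H})$, and let $N(\cdot)$ be a self-adjoint algebra norm on $\mathbb{B}(\mathcal{H})$. Then, for each choice of sign $\pm$, $$w_{N}(TS) \leq \min\Big\{N(T)w_{N}(S) + \tfrac{1}{2} w_{N}(TS \pm ST^* ),\ N(S)w_{N}(T) + \tfrac{1}{2} w_{N}(TS \pm S^*T)\Big\} \leq 2\min\Big\{N(T)w_{N}(S),\ N(S)w_{N}(T)\Big\} \leq 4w_{N}(T)w_{N}(S).$$
   Context: $\mathbb{B}(\mathcal{H})$ is the algebra of bounded linear operators on $\mathcal{H}$. A norm $N(\cdot)$ on $\mathbb{B}(\mathcal{H})$ is an algebra norm if $N(TS)\le N(T)N(S)$ for all $T,S$, and self-adjoint if $N(T^* )=N(T)$ for all $T$. For $A\in\mathbb{B}(\mathcal{H})$, ${\rm Re}(A)=\frac{A+A^*}{2}$. The generalized numerical radius is $w_N(T)=\sup_{\theta\in\mathbb{R}} N\big({\rm Re}(e^{i\theta}T)\big)$. *)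

theory Defs
  imports "HOL-Analysis.Analysis"
begin

class complex_inner = real_normed_vector +
  fixes scaleC :: "complex \<Rightarrow> 'a \<Rightarrow> 'a"
    and cinner :: "'a \<Rightarrow> 'a \<Rightarrow> complex"
  assumes scaleC_add_right: "scaleC a (x + y) = scaleC a x + scaleC a y"
    and scaleC_add_left: "scaleC (a + b) x = scaleC a x + scaleC b x"
    and scaleC_scaleC: "scaleC a (scaleC b x) = scaleC (a * b) x"
    and scaleC_one: "scaleC 1 x = x"
    and scaleR_scaleC: "scaleR r x = scaleC (complex_of_real r) x"
    and cinner_commute: "cinner x y = cnj (cinner y x)"
    and cinner_add_left: "cinner (x + y) z = cinner x z + cinner y z"
    and cinner_scaleC_left: "cinner (scaleC c x) y = cnj c * cinner x y"
    and cinner_nonneg: "0 \<le> Re (cinner x x)"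
    and cinner_eq_zero_iff: "cinner x x = 0 \<longleftrightarrow> x = 0"
    and norm_eq_sqrt_cinner: "norm x = sqrt (Re (cinner x x))"

class chilbert_space = complex_inner + complete_space

definition bounded_op :: "('a::complex_inner \<Rightarrow> 'a) \<Rightarrow> bool" where
  "bounded_op A \<longleftrightarrow>
     (\<forall>x y. A (x + y) = A x + A y) \<and> (\<forall>c x. A (scaleC c x) = scaleC c (A x)) \<and>
     (\<exists>K. \<forall>x. norm (A x) \<le> norm x * K)"

definition op_adj :: "('a::complex_inner \<Rightarrow> 'a) \<Rightarrow> ('a \<Rightarrow> 'a)" where
  "op_adj A = (SOME B. \<forall>x y. cinner (A x) y = cinner x (B y))"

definition op_add :: "('a::complex_inner \<Rightarrow> 'a) \<Rightarrow> ('a \<Rightarrow> 'a) \<Rightarrow> ('a \<Rightarrow> 'a)" where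
  "op_add A B = (\<lambda>x. A x + B x)"

definition op_scale :: "complex \<Rightarrow> ('a::complex_inner \<Rightarrow> 'a) \<Rightarrow> ('a \<Rightarrow> 'a)" where
  "op_scale c A = (\<lambda>x. scaleC c (A x))"

definition op_Re :: "('a::complex_inner \<Rightarrow> 'a) \<Rightarrow> ('a \<Rightarrow> 'a)" where
  "op_Re A = op_scale (1/2) (op_add A (op_adj A))"

definition is_op_norm :: "(('a::complex_inner \<Rightarrow> 'a) \<Rightarrow> real) \<Rightarrow> bool" where
  "is_op_norm N \<longleftrightarrow>
     (\<forall>A. bounded_op A \<longrightarrow> 0 \<le> N A) \<and>
     (\<forall>A. bounded_op A \<longrightarrow> (N A = 0 \<longleftrightarrow> A = (\<lambda>x. 0))) \<and>
     (\<forall>A B. bounded_op A \<and> bounded_op B \<longrightarrow> N (op_add A B) \<le> N A + N B) \<and>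
     (\<forall>c A. bounded_op A \<longrightarrow> N (op_scale c A) = cmod c * N A)"

definition is_algebra_norm :: "(('a::complex_inner \<Rightarrow> 'a) \<Rightarrow> real) \<Rightarrow> bool" where
  "is_algebra_norm N \<longleftrightarrow> is_op_norm N \<and>
     (\<forall>A B. bounded_op A \<and> bounded_op B \<longrightarrow> N (A \<circ> B) \<le> N A * N B)"

definition is_selfadjoint_norm :: "(('a::complex_inner \<Rightarrow> 'a) \<Rightarrow> real) \<Rightarrow> bool" where
  "is_selfadjoint_norm N \<longleftrightarrow> (\<forall>A. bounded_op A \<longrightarrow> N (op_adj A) = N A)"

definition w_N :: "(('a::complex_inner \<Rightarrow> 'a) \<Rightarrow> real) \<Rightarrow> ('a \<Rightarrow> 'a) \<Rightarrow> real" where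
  "w_N N T = (SUP \<theta>::real. N (op_Re (op_scale (exp (\<i> * complex_of_real \<theta>)) T)))"

end

(*
  Write A' for the adjoint of A, and the unimodular sign as sigma = rho^2 with |rho| = 1. For
  every unimodular u and R = Re (rho u S) one has the operator identity

    Re (u (TS + sigma S T')) = cnj rho (T R) + rho (R T'),

  so N (Re (u (TS + sigma S T'))) <= 2 N(T) N(R) <= 2 N(T) w_N(S), using that N is
  submultiplicative and N(T') = N(T). Since Re (u TS) is the average of Re (u (TS + sigma S T'))
  and Re (u (TS - sigma S T')), and -sigma is unimodular as well, this yields
  w_N(TS) <= N(T) w_N(S) + 1/2 w_N(TS + sigma S T'). The bounds involving N(S) w_N(T) and S' T
  follow by applying these to S' and T', because w_N(A') = w_N(A). Finally T = Re T + i Re (-i T)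
  gives N(T) <= 2 w_N(T).

  The adjoint, which is defined by choice, exists by the Riesz representation theorem; this is
  proved from the existence of nearest points in closed convex subsets of a Hilbert space.
*)

theory Submission
  imports Defs
begin

context complex_inner begin

lemma scaleC_zero_left [simp]: "scaleC 0 x = 0"
  using scaleC_add_left[of 0 0 x] by simp

lemma cinner_add_right: "cinner x (y + z) = cinner x y + cinner x z"
  using cinner_commute[of x "y + z"] cinner_commute[of x y] cinner_commute[of x z]
  by (simp add: cinner_add_left)

lemma cinner_scaleC_right: "cinner x (scaleC c y) = c * cinner x y"
  using cinner_commute[of x "scaleC c y"] cinner_commute[of x y]
  by (simp add: cinner_scaleC_left)

lemma cinner_zero_left [simp]: "cinner 0 y = 0"
  using cinner_scaleC_left[of 0 0 y] by simp

lemma cinner_diff_left: "cinner (x - y) z = cinner x z - cinner y z"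
  using cinner_add_left[of "x - y" y z] by simp

lemma cinner_diff_right: "cinner x (y - z) = cinner x y - cinner x z"
  using cinner_add_right[of x "y - z" z] by simp

lemma Re_cinner_self: "Re (cinner x x) = (norm x)\<^sup>2"
  using norm_eq_sqrt_cinner[of x] cinner_nonneg[of x] by simp

lemma norm_scaleC: "norm (scaleC c x) = cmod c * norm x"
proof -
  have "cinner (scaleC c x) (scaleC c x) = cnj c * c * cinner x x"
    by (simp add: cinner_scaleC_left cinner_scaleC_right mult.assoc)
  also have "cnj c * c = complex_of_real ((cmod c)\<^sup>2)"
    by (metis complex_norm_square mult.commute of_real_power)
  finally have "cinner (scaleC c x) (scaleC c x) = complex_of_real ((cmod c)\<^sup>2) * cinner x x" .
  from arg_cong[OF this, of Re] have "(norm (scaleC c x))\<^sup>2 = (cmod c * norm x)\<^sup>2"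
    by (simp add: Re_cinner_self power_mult_distrib)
  then show ?thesis
    by (simp add: power2_eq_iff_nonneg)
qed

lemma cinner_ext: "(\<And>y. cinner y a = cinner y b) \<Longrightarrow> a = b"
  using cinner_eq_zero_iff[of "a - b"] by (simp add: cinner_diff_right)

lemma norm_diff_scaleC_sq:
  "(norm (u - scaleC t v))\<^sup>2 = (norm u)\<^sup>2 - 2 * Re (cnj t * cinner v u) + (cmod t)\<^sup>2 * (norm v)\<^sup>2"
proof -
  have "cinner (u - scaleC t v) (u - scaleC t v)
      = cinner u u - (t * cnj (cinner v u) + cnj t * cinner v u) + cnj t * t * cinner v v"
    by (simp add: cinner_diff_left cinner_diff_right cinner_scaleC_left cinner_scaleC_right
        cinner_commute[of u v] algebra_simps)
  also have "cnj t * t = complex_of_real ((cmod t)\<^sup>2)"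
    by (metis complex_norm_square mult.commute of_real_power)
  finally have "cinner (u - scaleC t v) (u - scaleC t v)
      = cinner u u - (t * cnj (cinner v u) + cnj t * cinner v u)
        + complex_of_real ((cmod t)\<^sup>2) * cinner v v" .
  from arg_cong[OF this, of Re] show ?thesis
    by (simp add: Re_cinner_self)
qed

lemma norm_diff_projection_sq:
  assumes "v \<noteq> 0"
  shows "(norm (u - scaleC (cinner v u / complex_of_real ((norm v)\<^sup>2)) v))\<^sup>2
           = (norm u)\<^sup>2 - (cmod (cinner v u))\<^sup>2 / (norm v)\<^sup>2"
proof -
  define p where "p = cinner v u"
  have nv: "norm v \<noteq> 0" using assms by simp
  have re: "cnj (p / complex_of_real ((norm v)\<^sup>2)) * p = complex_of_real ((cmod p)\<^sup>2 / (norm v)\<^sup>2)"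
    by (simp add: complex_mult_cnj cmod_power2 mult.commute)
  have sq: "(cmod (p / complex_of_real ((norm v)\<^sup>2)))\<^sup>2 * (norm v)\<^sup>2 = (cmod p)\<^sup>2 / (norm v)\<^sup>2"
    using nv by (simp add: norm_divide power_divide norm_power field_simps)
  show ?thesis
    unfolding norm_diff_scaleC_sq p_def[symmetric] re sq Re_complex_of_real by simp
qed

lemma cinner_cauchy_schwarz: "cmod (cinner x y) \<le> norm x * norm y"
proof (cases "x = 0")
  case False
  have "0 \<le> (norm (y - scaleC (cinner x y / complex_of_real ((norm x)\<^sup>2)) x))\<^sup>2"
    by simp
  then have "0 \<le> (norm y)\<^sup>2 - (cmod (cinner x y))\<^sup>2 / (norm x)\<^sup>2"
    by (simp only: norm_diff_projection_sq[OF False])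
  then have "(cmod (cinner x y))\<^sup>2 \<le> (norm x * norm y)\<^sup>2"
    using False by (simp add: field_simps power_mult_distrib)
  then show ?thesis
    by (meson power2_le_imp_le norm_ge_zero zero_le_mult_iff)
qed simp

lemma cinner_eq_0_if_nearest:
  assumes "\<And>t. norm u \<le> norm (u - scaleC t v)"
  shows "cinner v u = 0"
proof (cases "v = 0")
  case False
  have "(norm u)\<^sup>2 \<le> (norm (u - scaleC (cinner v u / complex_of_real ((norm v)\<^sup>2)) v))\<^sup>2"
    using assms by (simp add: power_mono)
  then have "(norm u)\<^sup>2 \<le> (norm u)\<^sup>2 - (cmod (cinner v u))\<^sup>2 / (norm v)\<^sup>2"
    by (simp only: norm_diff_projection_sq[OF False])
  then have "(cmod (cinner v u))\<^sup>2 \<le> 0"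
    using False by (simp add: divide_le_0_iff)
  then show ?thesis by simp
qed simp

lemma parallelogram_law: "(norm (a + b))\<^sup>2 + (norm (a - b))\<^sup>2 = 2 * (norm a)\<^sup>2 + 2 * (norm b)\<^sup>2"
proof -
  have "cinner (a + b) (a + b) + cinner (a - b) (a - b) = 2 * cinner a a + 2 * cinner b b"
    by (simp add: cinner_add_left cinner_add_right cinner_diff_left cinner_diff_right algebra_simps)
  from arg_cong[OF this, of Re] show ?thesis
    by (simp add: Re_cinner_self)
qed

end

lemma convex_minimizing_sequence_Cauchy:
  fixes M :: "'a::complex_inner set"
  assumes "convex M" and mM: "\<And>n. m n \<in> M"
    and d_le: "\<And>x. x \<in> M \<Longrightarrow> d \<le> (norm (z - x))\<^sup>2"
    and m_lt: "\<And>n. (norm (z - m n))\<^sup>2 < d + inverse (real (Suc n))"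
  shows "Cauchy m"
proof (rule metric_CauchyI)
  have dist_sq: "(dist (m n) (m k))\<^sup>2 \<le> 2 * inverse (real (Suc n)) + 2 * inverse (real (Suc k))" for n k
  proof -
    define c where "c = (1/2) *\<^sub>R m n + (1/2) *\<^sub>R m k"
    have "c \<in> M" unfolding c_def by (rule convexD[OF \<open>convex M\<close> mM mM]) auto
    then have "4 * d \<le> (norm (2 *\<^sub>R (z - c)))\<^sup>2"
      using d_le by (simp add: power_mult_distrib)
    moreover have "(norm (2 *\<^sub>R (z - c)))\<^sup>2 + (norm (m n - m k))\<^sup>2
        = 2 * (norm (z - m n))\<^sup>2 + 2 * (norm (z - m k))\<^sup>2"
      using parallelogram_law[of "z - m n" "z - m k"]
      by (simp add: c_def algebra_simps scaleR_2 norm_minus_commute)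
    ultimately show ?thesis
      using m_lt[of n] m_lt[of k] by (simp add: dist_norm)
  qed
  fix e :: real
  assume "0 < e"
  obtain N where N: "inverse (real (Suc N)) < e\<^sup>2 / 4"
    using reals_Archimedean[of "e\<^sup>2 / 4"] \<open>0 < e\<close> by auto
  have "dist (m n) (m k) < e" if "n \<ge> N" "k \<ge> N" for n k
  proof -
    have "inverse (real (Suc n)) \<le> inverse (real (Suc N))"
      and "inverse (real (Suc k)) \<le> inverse (real (Suc N))"
      using that by (simp_all add: le_imp_inverse_le)
    then have "(dist (m n) (m k))\<^sup>2 < e\<^sup>2"
      using dist_sq[of n k] N by linarith
    then show ?thesis
      using \<open>0 < e\<close> by (simp add: power_less_imp_less_base)
  qed
  then show "\<exists>N. \<forall>n\<ge>N. \<forall>k\<ge>N. dist (m n) (m k) < e"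
    by blast
qed

lemma nearest_point_exists:
  fixes M :: "'a::chilbert_space set"
  assumes "closed M" and "convex M" and "M \<noteq> {}"
  shows "\<exists>m\<in>M. \<forall>x\<in>M. norm (z - m) \<le> norm (z - x)"
proof -
  define d where "d = (INF x\<in>M. (norm (z - x))\<^sup>2)"
  have bdd: "bdd_below ((\<lambda>x. (norm (z - x))\<^sup>2) ` M)"
    by (rule bdd_belowI2[of _ 0]) simp
  have d_le: "d \<le> (norm (z - x))\<^sup>2" if "x \<in> M" for x
    unfolding d_def using bdd that by (rule cINF_lower)
  have "\<exists>x\<in>M. (norm (z - x))\<^sup>2 < d + inverse (real (Suc n))" for n
    using cINF_less_iff[OF \<open>M \<noteq> {}\<close> bdd, of "d + inverse (real (Suc n))"]
    unfolding d_def[symmetric] by simp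
  then obtain m where mM: "\<And>n. m n \<in> M"
    and m_lt: "\<And>n. (norm (z - m n))\<^sup>2 < d + inverse (real (Suc n))"
    by metis
  have "Cauchy m"
    using \<open>convex M\<close> mM d_le m_lt by (rule convex_minimizing_sequence_Cauchy)
  then obtain l where lim: "m \<longlonglongrightarrow> l"
    using Cauchy_convergent convergent_def by blast
  have "l \<in> M"
    using \<open>closed M\<close> mM lim by (rule closed_sequentially)
  have l_le: "(norm (z - l))\<^sup>2 \<le> d"
  proof (rule LIMSEQ_le)
    show "(\<lambda>n. (norm (z - m n))\<^sup>2) \<longlonglongrightarrow> (norm (z - l))\<^sup>2"
      by (intro tendsto_intros lim)
    show "(\<lambda>n. d + inverse (real (Suc n))) \<longlonglongrightarrow> d"
      using tendsto_add[OF tendsto_const LIMSEQ_inverse_real_of_nat] by simp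
    show "\<exists>N. \<forall>n\<ge>N. (norm (z - m n))\<^sup>2 \<le> d + inverse (real (Suc n))"
      using m_lt less_imp_le by blast
  qed
  have "norm (z - l) \<le> norm (z - x)" if "x \<in> M" for x
    using order_trans[OF l_le d_le[OF that]] by (rule power2_le_imp_le) simp
  with \<open>l \<in> M\<close> show ?thesis by blast
qed

text \<open>The representing vector is a multiple of \<open>z - m\<close>, where \<open>f z = 1\<close> and \<open>m\<close> is the point of
  the kernel of \<open>f\<close> nearest to \<open>z\<close>; by minimality \<open>z - m\<close> is orthogonal to the kernel.\<close>

lemma riesz_representation:
  fixes f :: "'a::chilbert_space \<Rightarrow> complex"
  assumes add: "\<And>x y. f (x + y) = f x + f y"
    and scale: "\<And>c x. f (scaleC c x) = c * f x"
    and bound: "\<And>x. cmod (f x) \<le> norm x * K"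
  shows "\<exists>y. \<forall>x. f x = cinner y x"
proof (cases "\<forall>x. f x = 0")
  case True
  then show ?thesis by (intro exI[of _ 0]) simp
next
  case False
  then obtain z0 where "f z0 \<noteq> 0" by blast
  define z where "z = scaleC (1 / f z0) z0"
  have fz: "f z = 1"
    unfolding z_def using \<open>f z0 \<noteq> 0\<close> by (simp add: scale)
  have lin: "bounded_linear f"
    by (rule bounded_linear_intro[OF add _ bound]) (simp add: scaleR_scaleC scale scaleR_conv_of_real)
  have diff: "f (x - y) = f x - f y" for x y
    using add[of "x - y" y] by simp
  define M where "M = {x. f x = 0}"
  have "subspace M"
    unfolding M_def using lin by (simp add: bounded_linear.linear linear_subspace_kernel)
  have "closed M"
    unfolding M_def by (intro closed_Collect_eq linear_continuous_on lin continuous_on_const)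
  moreover have "convex M"
    using \<open>subspace M\<close> by (rule subspace_imp_convex)
  moreover have "M \<noteq> {}"
    using subspace_0[OF \<open>subspace M\<close>] by blast
  ultimately have "\<exists>m\<in>M. \<forall>x\<in>M. norm (z - m) \<le> norm (z - x)"
    by (rule nearest_point_exists)
  then obtain m where mM: "m \<in> M" and nearest: "\<And>x. x \<in> M \<Longrightarrow> norm (z - m) \<le> norm (z - x)"
    by blast
  define u where "u = z - m"
  have fu: "f u = 1"
    using fz mM unfolding u_def M_def by (simp add: diff)
  have orth: "cinner v u = 0" if "v \<in> M" for v
  proof (rule cinner_eq_0_if_nearest)
    fix t
    have "m + scaleC t v \<in> M"
      using mM that unfolding M_def by (simp add: add scale)
    from nearest[OF this] show "norm u \<le> norm (u - scaleC t v)"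
      unfolding u_def by (simp add: diff_diff_eq)
  qed
  have repr: "cinner u x = f x * cinner u u" for x
  proof -
    have "x - scaleC (f x) u \<in> M"
      unfolding M_def using fu by (simp add: diff scale)
    then have "cinner u (x - scaleC (f x) u) = 0"
      using orth cinner_commute[of u "x - scaleC (f x) u"] by simp
    then show ?thesis
      by (simp add: cinner_diff_right cinner_scaleC_right)
  qed
  have "cinner u u \<noteq> 0"
    using fu diff[of u u] cinner_eq_zero_iff[of u] by auto
  then have "f x = cinner (scaleC (1 / cnj (cinner u u)) u) x" for x
    using repr[of x] by (simp add: cinner_scaleC_left)
  then show ?thesis by blast
qed

lemma bounded_op_add_apply: "bounded_op A \<Longrightarrow> A (x + y) = A x + A y"
  unfolding bounded_op_def by blast

lemma bounded_op_scaleC_apply: "bounded_op A \<Longrightarrow> A (scaleC c x) = scaleC c (A x)"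
  unfolding bounded_op_def by blast

lemma bounded_op_bound:
  assumes "bounded_op A"
  obtains K where "K \<ge> 0" and "\<And>x. norm (A x) \<le> norm x * K"
proof -
  obtain K where K: "\<And>x. norm (A x) \<le> norm x * K"
    using assms unfolding bounded_op_def by blast
  have "norm (A x) \<le> norm x * \<bar>K\<bar>" for x
    using order_trans[OF K[of x] mult_left_mono[OF abs_ge_self norm_ge_zero]] .
  then show ?thesis
    using that[of "\<bar>K\<bar>"] by simp
qed

lemma bounded_op_add:
  assumes A: "bounded_op A" and B: "bounded_op B"
  shows "bounded_op (op_add A B)"
  unfolding bounded_op_def op_add_def
proof (intro conjI allI)
  fix x y show "A (x + y) + B (x + y) = A x + B x + (A y + B y)"
    by (simp add: bounded_op_add_apply[OF A] bounded_op_add_apply[OF B] algebra_simps)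
next
  fix c x show "A (scaleC c x) + B (scaleC c x) = scaleC c (A x + B x)"
    by (simp add: bounded_op_scaleC_apply[OF A] bounded_op_scaleC_apply[OF B] scaleC_add_right)
next
  obtain K1 K2 where "\<And>x. norm (A x) \<le> norm x * K1" and "\<And>x. norm (B x) \<le> norm x * K2"
    using bounded_op_bound[OF A] bounded_op_bound[OF B] by metis
  then have "norm (A x + B x) \<le> norm x * (K1 + K2)" for x
    by (smt (verit, best) distrib_left norm_triangle_ineq)
  then show "\<exists>K. \<forall>x. norm (A x + B x) \<le> norm x * K" by blast
qed

lemma bounded_op_scale:
  assumes A: "bounded_op A"
  shows "bounded_op (op_scale c A)"
  unfolding bounded_op_def op_scale_def
proof (intro conjI allI)
  fix x y show "scaleC c (A (x + y)) = scaleC c (A x) + scaleC c (A y)"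
    by (simp add: bounded_op_add_apply[OF A] scaleC_add_right)
next
  fix d x show "scaleC c (A (scaleC d x)) = scaleC d (scaleC c (A x))"
    by (simp add: bounded_op_scaleC_apply[OF A] scaleC_scaleC mult.commute)
next
  obtain K where "\<And>x. norm (A x) \<le> norm x * K"
    using bounded_op_bound[OF A] by metis
  then have "norm (scaleC c (A x)) \<le> norm x * (cmod c * K)" for x
    using mult_left_mono[of "norm (A x)" "norm x * K" "cmod c"] by (simp add: norm_scaleC algebra_simps)
  then show "\<exists>K. \<forall>x. norm (scaleC c (A x)) \<le> norm x * K" by blast
qed

lemma bounded_op_comp:
  assumes A: "bounded_op A" and B: "bounded_op B"
  shows "bounded_op (A \<circ> B)"
  unfolding bounded_op_def o_def
proof (intro conjI allI)
  fix x y show "A (B (x + y)) = A (B x) + A (B y)"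
    by (simp add: bounded_op_add_apply[OF A] bounded_op_add_apply[OF B])
next
  fix c x show "A (B (scaleC c x)) = scaleC c (A (B x))"
    by (simp add: bounded_op_scaleC_apply[OF A] bounded_op_scaleC_apply[OF B])
next
  obtain K1 where "K1 \<ge> 0" and K1: "\<And>x. norm (A x) \<le> norm x * K1"
    using bounded_op_bound[OF A] by metis
  obtain K2 where K2: "\<And>x. norm (B x) \<le> norm x * K2"
    using bounded_op_bound[OF B] by metis
  have "norm (A (B x)) \<le> norm x * (K2 * K1)" for x
    using order_trans[OF K1 mult_right_mono[OF K2 \<open>K1 \<ge> 0\<close>]] by (simp add: mult.assoc)
  then show "\<exists>K. \<forall>x. norm (A (B x)) \<le> norm x * K" by blast
qed

lemma op_adj_exists:
  fixes A :: "'a::chilbert_space \<Rightarrow> 'a"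
  assumes "bounded_op A"
  shows "\<exists>B. \<forall>x y. cinner (A x) y = cinner x (B y)"
proof -
  obtain K where K: "\<And>x. norm (A x) \<le> norm x * K"
    using bounded_op_bound[OF assms] by metis
  have "\<exists>z. \<forall>x. cinner y (A x) = cinner z x" for y
  proof (rule riesz_representation)
    show "cinner y (A (x1 + x2)) = cinner y (A x1) + cinner y (A x2)" for x1 x2
      by (simp add: bounded_op_add_apply[OF assms] cinner_add_right)
    show "cinner y (A (scaleC c x)) = c * cinner y (A x)" for c x
      by (simp add: bounded_op_scaleC_apply[OF assms] cinner_scaleC_right)
    show "cmod (cinner y (A x)) \<le> norm x * (norm y * K)" for x
    proof -
      have "cmod (cinner y (A x)) \<le> norm y * norm (A x)"
        by (rule cinner_cauchy_schwarz)
      also have "\<dots> \<le> norm y * (norm x * K)"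
        using K[of x] by (simp add: mult_left_mono)
      finally show ?thesis
        by (simp add: algebra_simps)
    qed
  qed
  then obtain B where B: "\<And>y x. cinner y (A x) = cinner (B y) x"
    by metis
  have "cinner (A x) y = cinner x (B y)" for x y
    using B[of y x] cinner_commute[of "A x" y] cinner_commute[of x "B y"] by simp
  then show ?thesis by blast
qed

lemma cinner_op_adj_right:
  fixes A :: "'a::chilbert_space \<Rightarrow> 'a"
  assumes "bounded_op A"
  shows "cinner x (op_adj A y) = cinner (A x) y"
proof -
  have "\<forall>x y. cinner (A x) y = cinner x (op_adj A y)"
    unfolding op_adj_def by (rule someI_ex[OF op_adj_exists[OF assms]])
  then show ?thesis by simp
qed

lemma cinner_op_adj_left:
  fixes A :: "'a::chilbert_space \<Rightarrow> 'a"
  assumes "bounded_op A"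
  shows "cinner (op_adj A y) x = cinner y (A x)"
  using cinner_op_adj_right[OF assms, of x y] cinner_commute[of "op_adj A y" x]
    cinner_commute[of y "A x"] by simp

lemma op_adj_eqI:
  fixes A :: "'a::chilbert_space \<Rightarrow> 'a"
  assumes "bounded_op A" and "\<And>x y. cinner (A x) y = cinner x (B y)"
  shows "op_adj A = B"
proof
  show "op_adj A y = B y" for y
    by (rule cinner_ext) (simp add: cinner_op_adj_right[OF assms(1)] assms(2))
qed

lemma bounded_op_adj:
  fixes A :: "'a::chilbert_space \<Rightarrow> 'a"
  assumes A: "bounded_op A"
  shows "bounded_op (op_adj A)"
  unfolding bounded_op_def
proof (intro conjI allI)
  show "op_adj A (y1 + y2) = op_adj A y1 + op_adj A y2" for y1 y2
    by (rule cinner_ext) (simp add: cinner_op_adj_right[OF A] cinner_add_right)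
  show "op_adj A (scaleC c y) = scaleC c (op_adj A y)" for c y
    by (rule cinner_ext) (simp add: cinner_op_adj_right[OF A] cinner_scaleC_right)
  obtain K where "K \<ge> 0" and K: "\<And>x. norm (A x) \<le> norm x * K"
    using bounded_op_bound[OF A] by metis
  have "norm (op_adj A y) \<le> norm y * K" for y
  proof (cases "op_adj A y = 0")
    case True
    then show ?thesis using \<open>K \<ge> 0\<close> by simp
  next
    case False
    define w where "w = op_adj A y"
    have "(norm w)\<^sup>2 = Re (cinner (A w) y)"
      unfolding w_def by (simp add: cinner_op_adj_right[OF A] flip: Re_cinner_self)
    also have "\<dots> \<le> norm (A w) * norm y"
      by (rule order_trans[OF complex_Re_le_cmod cinner_cauchy_schwarz])
    also have "\<dots> \<le> norm w * (norm y * K)"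
      using mult_right_mono[OF K[of w] norm_ge_zero[of y]] by (simp add: algebra_simps)
    finally show ?thesis
      using False unfolding w_def by (simp add: power2_eq_square)
  qed
  then show "\<exists>K. \<forall>x. norm (op_adj A x) \<le> norm x * K" by blast
qed

lemma op_adj_adj:
  fixes A :: "'a::chilbert_space \<Rightarrow> 'a"
  assumes "bounded_op A"
  shows "op_adj (op_adj A) = A"
  by (rule op_adj_eqI[OF bounded_op_adj[OF assms]]) (rule cinner_op_adj_left[OF assms])

lemma op_adj_add:
  fixes A B :: "'a::chilbert_space \<Rightarrow> 'a"
  assumes A: "bounded_op A" and B: "bounded_op B"
  shows "op_adj (op_add A B) = op_add (op_adj A) (op_adj B)"
  by (rule op_adj_eqI[OF bounded_op_add[OF A B]])
     (simp add: op_add_def cinner_add_left cinner_add_right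
        cinner_op_adj_right[OF A] cinner_op_adj_right[OF B])

lemma op_adj_scale:
  fixes A :: "'a::chilbert_space \<Rightarrow> 'a"
  assumes A: "bounded_op A"
  shows "op_adj (op_scale c A) = op_scale (cnj c) (op_adj A)"
  by (rule op_adj_eqI[OF bounded_op_scale[OF A]])
     (simp add: op_scale_def cinner_scaleC_left cinner_scaleC_right cinner_op_adj_right[OF A])

lemma op_adj_comp:
  fixes A B :: "'a::chilbert_space \<Rightarrow> 'a"
  assumes A: "bounded_op A" and B: "bounded_op B"
  shows "op_adj (A \<circ> B) = op_adj B \<circ> op_adj A"
  by (rule op_adj_eqI[OF bounded_op_comp[OF A B]])
     (simp add: cinner_op_adj_right[OF A] cinner_op_adj_right[OF B])

lemma bounded_op_Re:
  fixes A :: "'a::chilbert_space \<Rightarrow> 'a"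
  assumes "bounded_op A"
  shows "bounded_op (op_Re A)"
  unfolding op_Re_def by (intro bounded_op_scale bounded_op_add bounded_op_adj assms)

lemma op_eqI_cinner:
  fixes A B :: "'a::complex_inner \<Rightarrow> 'a"
  shows "(\<And>x y. cinner y (A x) = cinner y (B x)) \<Longrightarrow> A = B"
  by (rule ext) (rule cinner_ext)

lemma op_Re_scale_adj:
  fixes A :: "'a::chilbert_space \<Rightarrow> 'a"
  assumes "bounded_op A"
  shows "op_Re (op_scale c (op_adj A)) = op_Re (op_scale (cnj c) A)"
  unfolding op_Re_def using assms
  by (simp add: op_adj_scale op_adj_adj bounded_op_adj) (simp add: op_add_def add.commute)

lemma op_Re_scale_split:
  fixes P R :: "'a::chilbert_space \<Rightarrow> 'a"
  assumes "bounded_op P" and "bounded_op R"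
  shows "op_Re (op_scale B P) = op_scale (1/2)
           (op_add (op_Re (op_scale B (op_add P (op_scale \<sigma> R))))
                   (op_Re (op_scale B (op_add P (op_scale (-\<sigma>) R)))))"
  unfolding op_Re_def using assms
  by (simp add: op_adj_add op_adj_scale bounded_op_add bounded_op_scale)
     (rule op_eqI_cinner,
      simp add: op_add_def op_scale_def cinner_add_right cinner_scaleC_right algebra_simps)

text \<open>Every unimodular \<open>\<sigma>\<close> is some \<open>\<rho>\<^sup>2\<close>, so this handles \<open>TS + \<sigma> S T'\<close> for all \<open>|\<sigma>| = 1\<close>;
  the signs \<open>\<sigma> = 1\<close> and \<open>\<sigma> = -1\<close> correspond to \<open>\<rho> = 1\<close> and \<open>\<rho> = \<i>\<close>.\<close>

lemma op_Re_scale_comp_add_adj: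
  fixes T S :: "'a::chilbert_space \<Rightarrow> 'a"
  assumes T: "bounded_op T" and S: "bounded_op S" and "cmod \<rho> = 1"
  shows "op_Re (op_scale B (op_add (T \<circ> S) (op_scale (\<rho>\<^sup>2) (S \<circ> op_adj T))))
           = op_add (op_scale (cnj \<rho>) (T \<circ> op_Re (op_scale (\<rho> * B) S)))
                    (op_scale \<rho> (op_Re (op_scale (\<rho> * B) S) \<circ> op_adj T))"
proof -
  have "bounded_op (op_adj T)" and "bounded_op (op_adj S)"
    using T S by (simp_all add: bounded_op_adj)
  moreover have "cnj \<rho> * \<rho> = 1"
    using \<open>cmod \<rho> = 1\<close> complex_norm_square[of \<rho>] by (simp add: mult.commute)
  ultimately show ?thesis
    unfolding op_Re_def using T S
    by (simp only: op_adj_add op_adj_scale op_adj_comp op_adj_adj bounded_op_add bounded_op_scale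
          bounded_op_comp)
       (rule op_eqI_cinner, simp add: op_add_def op_scale_def bounded_op_add_apply[OF T]
          bounded_op_scaleC_apply[OF T] cinner_add_right cinner_scaleC_right complex_cnj_mult, algebra)
qed

lemma op_eq_Re_add_i_Re:
  fixes T :: "'a::chilbert_space \<Rightarrow> 'a"
  assumes "bounded_op T"
  shows "T = op_add (op_Re T) (op_scale \<i> (op_Re (op_scale (-\<i>) T)))"
  unfolding op_Re_def using assms
  by (simp add: op_adj_add op_adj_scale bounded_op_add bounded_op_scale bounded_op_adj)
     (rule op_eqI_cinner,
      simp add: op_add_def op_scale_def cinner_add_right cinner_scaleC_right algebra_simps)

lemma unimodular_eq_exp_i:
  assumes "cmod u = 1"
  obtains \<theta> :: real where "u = exp (\<i> * complex_of_real \<theta>)"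
proof
  have "u \<noteq> 0"
    using assms by auto
  then show "u = exp (\<i> * complex_of_real (Arg u))"
    using assms cis_Arg[of u] by (simp add: cis_conv_exp sgn_eq)
qed

lemma w_N_adj:
  fixes A :: "'a::chilbert_space \<Rightarrow> 'a"
  assumes "bounded_op A"
  shows "w_N N (op_adj A) = w_N N A"
proof -
  have eq: "(\<lambda>\<theta>. N (op_Re (op_scale (exp (\<i> * complex_of_real \<theta>)) (op_adj A))))
      = (\<lambda>\<theta>. N (op_Re (op_scale (exp (\<i> * complex_of_real \<theta>)) A))) \<circ> uminus"
    using op_Re_scale_adj[OF assms] by (auto simp: exp_cnj)
  have "range (uminus :: real \<Rightarrow> real) = UNIV"
    by (rule surjI[of _ uminus]) simp
  then show ?thesis
    unfolding w_N_def eq by (simp only: image_comp[symmetric])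
qed

lemma op_adj_comp_add_adj_comp:
  fixes T S :: "'a::chilbert_space \<Rightarrow> 'a"
  assumes "bounded_op T" and "bounded_op S"
  shows "op_adj (op_add (T \<circ> S) (op_scale \<sigma> (op_adj S \<circ> T)))
           = op_add (op_adj S \<circ> op_adj T) (op_scale (cnj \<sigma>) (op_adj T \<circ> S))"
  using assms by (simp add: op_adj_add op_adj_scale op_adj_comp op_adj_adj bounded_op_add
      bounded_op_scale bounded_op_comp bounded_op_adj)

context
  fixes N :: "('a::chilbert_space \<Rightarrow> 'a) \<Rightarrow> real"
  assumes alg: "is_algebra_norm N" and sa: "is_selfadjoint_norm N"
begin

lemma N_nonneg: "bounded_op A \<Longrightarrow> 0 \<le> N A"
  using alg unfolding is_algebra_norm_def is_op_norm_def by blast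

lemma N_add: "bounded_op A \<Longrightarrow> bounded_op B \<Longrightarrow> N (op_add A B) \<le> N A + N B"
  using alg unfolding is_algebra_norm_def is_op_norm_def by blast

lemma N_scale: "bounded_op A \<Longrightarrow> N (op_scale c A) = cmod c * N A"
  using alg unfolding is_algebra_norm_def is_op_norm_def by blast

lemma N_comp: "bounded_op A \<Longrightarrow> bounded_op B \<Longrightarrow> N (A \<circ> B) \<le> N A * N B"
  using alg unfolding is_algebra_norm_def by blast

lemma N_adj: "bounded_op A \<Longrightarrow> N (op_adj A) = N A"
  using sa unfolding is_selfadjoint_norm_def by blast

lemma N_add_scale_unimodular:
  assumes "bounded_op A" and "bounded_op B" and "cmod c = 1" and "cmod d = 1"
  shows "N (op_add (op_scale c A) (op_scale d B)) \<le> N A + N B"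
  using N_add[OF bounded_op_scale[OF assms(1), of c] bounded_op_scale[OF assms(2), of d]]
    N_scale[OF assms(1), of c] N_scale[OF assms(2), of d] assms(3,4) by simp

lemma N_op_Re_le:
  assumes "bounded_op A"
  shows "N (op_Re A) \<le> N A"
proof -
  have "N (op_Re A) = 1/2 * N (op_add A (op_adj A))"
    unfolding op_Re_def using assms by (simp add: N_scale bounded_op_add bounded_op_adj)
  also have "\<dots> \<le> 1/2 * (N A + N (op_adj A))"
    using N_add[OF assms bounded_op_adj[OF assms]] by simp
  finally show ?thesis
    using N_adj[OF assms] by simp
qed

lemma N_op_Re_scale_le_w_N:
  assumes "bounded_op A" and "cmod u = 1"
  shows "N (op_Re (op_scale u A)) \<le> w_N N A"
proof -
  obtain \<theta> where u: "u = exp (\<i> * complex_of_real \<theta>)"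
    using unimodular_eq_exp_i[OF assms(2)] .
  have "N (op_Re (op_scale (exp (\<i> * complex_of_real \<phi>)) A)) \<le> N A" for \<phi>
    using N_op_Re_le[OF bounded_op_scale[OF assms(1), of "exp (\<i> * complex_of_real \<phi>)"]]
      N_scale[OF assms(1)] by simp
  then have "bdd_above (range (\<lambda>\<phi>. N (op_Re (op_scale (exp (\<i> * complex_of_real \<phi>)) A))))"
    by (rule bdd_aboveI2)
  then show ?thesis
    unfolding w_N_def u by (rule cSUP_upper[OF UNIV_I])
qed

lemma w_N_le:
  assumes "\<And>u. cmod u = 1 \<Longrightarrow> N (op_Re (op_scale u A)) \<le> M"
  shows "w_N N A \<le> M"
  unfolding w_N_def by (rule cSUP_least) (simp_all add: assms)

lemma w_N_nonneg:
  assumes "bounded_op A"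
  shows "0 \<le> w_N N A"
  using N_nonneg[OF bounded_op_Re[OF bounded_op_scale[OF assms, of 1]]]
    N_op_Re_scale_le_w_N[OF assms, of 1] by simp

lemma N_le_2_w_N:
  assumes "bounded_op T"
  shows "N T \<le> 2 * w_N N T"
proof -
  have ReT: "bounded_op (op_Re T)" and ReiT: "bounded_op (op_Re (op_scale (-\<i>) T))"
    using assms by (simp_all add: bounded_op_Re bounded_op_scale)
  have "N T = N (op_add (op_Re T) (op_scale \<i> (op_Re (op_scale (-\<i>) T))))"
    using arg_cong[OF op_eq_Re_add_i_Re[OF assms], of N] .
  also have "\<dots> \<le> N (op_Re T) + N (op_Re (op_scale (-\<i>) T))"
    using N_add[OF ReT bounded_op_scale[OF ReiT, of \<i>]] N_scale[OF ReiT, of \<i>] by simp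
  also have "N (op_Re T) \<le> w_N N T"
    using N_op_Re_scale_le_w_N[OF assms, of 1] by (simp add: op_scale_def scaleC_one)
  also have "N (op_Re (op_scale (-\<i>) T)) \<le> w_N N T"
    using N_op_Re_scale_le_w_N[OF assms, of "-\<i>"] by simp
  finally show ?thesis by simp
qed

lemma w_N_comp_add_comp_adj_le:
  assumes T: "bounded_op T" and S: "bounded_op S" and "cmod \<sigma> = 1"
  shows "w_N N (op_add (T \<circ> S) (op_scale \<sigma> (S \<circ> op_adj T))) \<le> 2 * (N T * w_N N S)"
proof (rule w_N_le)
  fix u :: complex
  assume "cmod u = 1"
  define \<rho> where "\<rho> = csqrt \<sigma>"
  have "cmod \<rho> = 1" and "\<rho>\<^sup>2 = \<sigma>"
    using \<open>cmod \<sigma> = 1\<close> by (simp_all add: \<rho>_def)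
  define R where "R = op_Re (op_scale (\<rho> * u) S)"
  have R: "bounded_op R"
    unfolding R_def using S by (simp add: bounded_op_Re bounded_op_scale)
  have NR: "N R \<le> w_N N S"
    unfolding R_def using N_op_Re_scale_le_w_N[OF S] \<open>cmod \<rho> = 1\<close> \<open>cmod u = 1\<close>
    by (simp add: norm_mult)
  have "N (op_Re (op_scale u (op_add (T \<circ> S) (op_scale \<sigma> (S \<circ> op_adj T)))))
      = N (op_add (op_scale (cnj \<rho>) (T \<circ> R)) (op_scale \<rho> (R \<circ> op_adj T)))"
    using op_Re_scale_comp_add_adj[OF T S \<open>cmod \<rho> = 1\<close>, of u]
    unfolding R_def \<open>\<rho>\<^sup>2 = \<sigma>\<close> by simp
  also have "\<dots> \<le> N (T \<circ> R) + N (R \<circ> op_adj T)"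
    using \<open>cmod \<rho> = 1\<close>
    by (intro N_add_scale_unimodular bounded_op_comp bounded_op_adj T R) simp_all
  also have "\<dots> \<le> 2 * (N T * N R)"
    using N_comp[OF T R] N_comp[OF R bounded_op_adj[OF T]] unfolding N_adj[OF T]
    by (simp add: mult.commute)
  also have "\<dots> \<le> 2 * (N T * w_N N S)"
    using mult_left_mono[OF NR N_nonneg[OF T]] by simp
  finally show "N (op_Re (op_scale u (op_add (T \<circ> S) (op_scale \<sigma> (S \<circ> op_adj T)))))
      \<le> 2 * (N T * w_N N S)" .
qed

lemma w_N_comp_le_norm_left:
  assumes T: "bounded_op T" and S: "bounded_op S" and "cmod \<sigma> = 1"
  shows "w_N N (T \<circ> S) \<le> N T * w_N N S + 1/2 * w_N N (op_add (T \<circ> S) (op_scale \<sigma> (S \<circ> op_adj T)))"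
proof (rule w_N_le)
  fix u :: complex
  assume "cmod u = 1"
  let ?X = "\<lambda>\<tau>. op_add (T \<circ> S) (op_scale \<tau> (S \<circ> op_adj T))"
  have X: "bounded_op (op_Re (op_scale u (?X \<tau>)))" for \<tau>
    using T S by (simp add: bounded_op_Re bounded_op_scale bounded_op_add bounded_op_comp bounded_op_adj)
  have "N (op_Re (op_scale u (T \<circ> S)))
      = 1/2 * N (op_add (op_Re (op_scale u (?X \<sigma>))) (op_Re (op_scale u (?X (-\<sigma>)))))"
    using op_Re_scale_split[OF bounded_op_comp[OF T S] bounded_op_comp[OF S bounded_op_adj[OF T]],
        of u \<sigma>] N_scale[OF bounded_op_add[OF X X]] by simp
  also have "\<dots> \<le> 1/2 * (N (op_Re (op_scale u (?X \<sigma>))) + N (op_Re (op_scale u (?X (-\<sigma>)))))"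
    using N_add[OF X X] by simp
  also have "\<dots> \<le> 1/2 * (w_N N (?X \<sigma>) + 2 * (N T * w_N N S))"
    using N_op_Re_scale_le_w_N[OF _ \<open>cmod u = 1\<close>, of "?X \<sigma>"]
      N_op_Re_scale_le_w_N[OF _ \<open>cmod u = 1\<close>, of "?X (-\<sigma>)"]
      w_N_comp_add_comp_adj_le[OF T S, of "-\<sigma>"] \<open>cmod \<sigma> = 1\<close> T S
    by (simp add: bounded_op_scale bounded_op_add bounded_op_comp bounded_op_adj)
  finally show "N (op_Re (op_scale u (T \<circ> S))) \<le> N T * w_N N S + 1/2 * w_N N (?X \<sigma>)"
    by simp
qed

lemma w_N_comp_add_adj_comp_le:
  assumes T: "bounded_op T" and S: "bounded_op S" and "cmod \<sigma> = 1"
  shows "w_N N (op_add (T \<circ> S) (op_scale \<sigma> (op_adj S \<circ> T))) \<le> 2 * (N S * w_N N T)"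
proof -
  have "w_N N (op_add (T \<circ> S) (op_scale \<sigma> (op_adj S \<circ> T)))
      = w_N N (op_add (op_adj S \<circ> op_adj T) (op_scale (cnj \<sigma>) (op_adj T \<circ> S)))"
    using T S by (simp add: w_N_adj op_adj_comp_add_adj_comp [symmetric] bounded_op_add
        bounded_op_scale bounded_op_comp bounded_op_adj)
  also have "\<dots> \<le> 2 * (N S * w_N N T)"
    using w_N_comp_add_comp_adj_le[OF bounded_op_adj[OF S] bounded_op_adj[OF T], of "cnj \<sigma>"]
      \<open>cmod \<sigma> = 1\<close> by (simp add: op_adj_adj S T N_adj w_N_adj)
  finally show ?thesis .
qed

lemma w_N_comp_le_norm_right:
  assumes T: "bounded_op T" and S: "bounded_op S" and "cmod \<sigma> = 1"
  shows "w_N N (T \<circ> S) \<le> N S * w_N N T + 1/2 * w_N N (op_add (T \<circ> S) (op_scale \<sigma> (op_adj S \<circ> T)))"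
proof -
  have "w_N N (T \<circ> S) = w_N N (op_adj S \<circ> op_adj T)"
    using T S by (simp add: w_N_adj op_adj_comp [symmetric] bounded_op_comp)
  also have "\<dots> \<le> N S * w_N N T
      + 1/2 * w_N N (op_add (op_adj S \<circ> op_adj T) (op_scale (cnj \<sigma>) (op_adj T \<circ> S)))"
    using w_N_comp_le_norm_left[OF bounded_op_adj[OF S] bounded_op_adj[OF T], of "cnj \<sigma>"]
      \<open>cmod \<sigma> = 1\<close> by (simp add: op_adj_adj S T N_adj w_N_adj)
  also have "w_N N (op_add (op_adj S \<circ> op_adj T) (op_scale (cnj \<sigma>) (op_adj T \<circ> S)))
      = w_N N (op_add (T \<circ> S) (op_scale \<sigma> (op_adj S \<circ> T)))"
    using T S by (simp add: w_N_adj op_adj_comp_add_adj_comp [symmetric] bounded_op_add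
        bounded_op_scale bounded_op_comp bounded_op_adj)
  finally show ?thesis .
qed

end

lemma min_add_half_le:
  fixes a b x y :: real
  assumes "x \<le> 2 * a" and "y \<le> 2 * b"
  shows "min (a + 1/2 * x) (b + 1/2 * y) \<le> 2 * min a b"
  using assms by (simp add: min_def)

theorem theorem2p8:
  fixes T S :: "'a::chilbert_space \<Rightarrow> 'a"
    and N :: "('a \<Rightarrow> 'a) \<Rightarrow> real"
    and \<sigma> :: complex
  assumes "bounded_op T" and "bounded_op S"
    and "is_algebra_norm N" and "is_selfadjoint_norm N"
    and "\<sigma> = 1 \<or> \<sigma> = -1"
  shows "w_N N (T \<circ> S)
           \<le> min (N T * w_N N S + 1/2 * w_N N (op_add (T \<circ> S) (op_scale \<sigma> (S \<circ> op_adj T))))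
                 (N S * w_N N T + 1/2 * w_N N (op_add (T \<circ> S) (op_scale \<sigma> (op_adj S \<circ> T))))
       \<and> min (N T * w_N N S + 1/2 * w_N N (op_add (T \<circ> S) (op_scale \<sigma> (S \<circ> op_adj T))))
             (N S * w_N N T + 1/2 * w_N N (op_add (T \<circ> S) (op_scale \<sigma> (op_adj S \<circ> T))))
           \<le> 2 * min (N T * w_N N S) (N S * w_N N T)
       \<and> 2 * min (N T * w_N N S) (N S * w_N N T) \<le> 4 * w_N N T * w_N N S"
proof -
  note N = assms(3,4) and TS = assms(1,2)
  have "cmod \<sigma> = 1"
    using assms(5) by auto
  note bounds = w_N_comp_le_norm_left[OF N TS this] w_N_comp_le_norm_right[OF N TS this]
    w_N_comp_add_comp_adj_le[OF N TS this] w_N_comp_add_adj_comp_le[OF N TS this]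
  have "2 * min (N T * w_N N S) (N S * w_N N T) \<le> 2 * (N T * w_N N S)"
    by simp
  also have "\<dots> \<le> 4 * w_N N T * w_N N S"
    using mult_right_mono[OF N_le_2_w_N[OF N assms(1)] w_N_nonneg[OF N assms(2)]]
    by (simp add: mult.commute mult.left_commute)
  finally show ?thesis
    using bounds(1,2) min_add_half_le[OF bounds(3,4)] by simp
qed

end
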